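(* Let $n\ge 1$ and $1\le k\le n$. The number of $\alpha\in\mathcal{ORCT}_n$ with $w^+(\alpha)=k$ is $$F(n;k)=2\sum_{p=1}^{k}\binom{n-1}{p-1}-1.$$
   Context: $X_n=\{1,2,\dots,n\}$ with its usual order; maps are written on the right ($x\alpha$). A map $\alpha:X_n\to X_n$ is order-preserving if $x\le y$ implies $x\alpha\le y\alpha$, order-reversing if $x\le y$ implies $x\alpha\ge y\alpha$, and a contraction if $|x\alpha-y\alpha|\le|x-y|$ for all $x,y$. $\mathcal{ORCT}_n$ is the set of all maps $X_n\to X_n$ (defined on all of $X_n$) that are contractions and are either order-preserving or order-reversing. Right waist $w^+(\alpha)=\max(\mathrm{Im}\,\alpha)$. *)

theory Defs
  imports "HOL-Library.FuncSet"
begin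

text \<open>Full transformations of X_n = {1..n} are represented as extensional maps
  in PiE {1..n} (\%_. {1..n}) (value undefined outside X_n).\<close>

definition order_preserving :: "nat \<Rightarrow> (nat \<Rightarrow> nat) \<Rightarrow> bool" where
  "order_preserving n f \<longleftrightarrow> (\<forall>x\<in>{1..n}. \<forall>y\<in>{1..n}. x \<le> y \<longrightarrow> f x \<le> f y)"

definition order_reversing :: "nat \<Rightarrow> (nat \<Rightarrow> nat) \<Rightarrow> bool" where
  "order_reversing n f \<longleftrightarrow> (\<forall>x\<in>{1..n}. \<forall>y\<in>{1..n}. x \<le> y \<longrightarrow> f x \<ge> f y)"

definition contraction :: "nat \<Rightarrow> (nat \<Rightarrow> nat) \<Rightarrow> bool" where
  "contraction n f \<longleftrightarrow>
     (\<forall>x\<in>{1..n}. \<forall>y\<in>{1..n}. \<bar>int (f x) - int (f y)\<bar> \<le> \<bar>int x - int y\<bar>)"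

definition ORCT :: "nat \<Rightarrow> (nat \<Rightarrow> nat) set" where
  "ORCT n = {f \<in> {1..n} \<rightarrow>\<^sub>E {1..n}.
      contraction n f \<and> (order_preserving n f \<or> order_reversing n f)}"

definition right_waist :: "nat \<Rightarrow> (nat \<Rightarrow> nat) \<Rightarrow> nat" where
  "right_waist n f = Max (f ` {1..n})"

end

theory Submission imports Defs begin

(* An order-preserving contraction f of {1..n} rises by 0 or 1 between consecutive
   points, and its waist is f n.  Hence f is determined by f n = k and its set of
   jumps J(f) = {i \<in> {1..n-1}. f i \<noteq> f (i+1)}: reading from the right,
   f x = k - #{j \<in> J(f). x \<le> j}.  As f 1 \<ge> 1 we get |J(f)| < k, and conversely every
   D \<subseteq> {1..n-1} with |D| < k defines such a map (its "staircase").  So there are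
   \<Sum>_{s<k} C(n-1, s) order-preserving maps of waist k.  Reflection x \<mapsto> n+1-x keeps
   the image (hence the waist) and contractivity and exchanges order-preserving with
   order-reversing maps, so the order-reversing maps of waist k are equally many.  A map
   in both classes is constant, so only the constant map k is counted twice, and
   inclusion-exclusion gives 2 \<Sum>_{p=1..k} C(n-1, p-1) - 1. *)

lemma card_subsets_card_less:
  assumes "finite A"
  shows "card {D. D \<subseteq> A \<and> card D < k} = (\<Sum>s<k. card A choose s)"
proof -
  have "{D. D \<subseteq> A \<and> card D < k} = (\<Union>s<k. {D. D \<subseteq> A \<and> card D = s})" by auto
  also have "card \<dots> = (\<Sum>s<k. card {D. D \<subseteq> A \<and> card D = s})"
    by (rule card_UN_disjoint) (use assms in \<open>auto intro: finite_subset[of _ "Pow A"]\<close>)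
  also have "\<dots> = (\<Sum>s<k. card A choose s)" using n_subsets[OF assms] by simp
  finally show ?thesis .
qed

text \<open>\<open>above D x\<close> counts the elements of D that are at least x; it describes
  how far a staircase map has descended from its top value.\<close>

definition above :: "nat set \<Rightarrow> nat \<Rightarrow> nat" where
  "above D x = card {j \<in> D. x \<le> j}"

lemma above_Suc:
  assumes "finite D"
  shows "above D x = above D (Suc x) + (if x \<in> D then 1 else 0)"
proof -
  have "{j \<in> D. x \<le> j} = (if x \<in> D then insert x {j \<in> D. Suc x \<le> j} else {j \<in> D. Suc x \<le> j})"
    by (auto simp: Suc_le_eq order_le_less)
  thus ?thesis using assms by (simp add: above_def)
qed

lemma above_antimono:
  assumes "finite D" "x \<le> y"
  shows "above D y \<le> above D x"
  unfolding above_def using assms by (intro card_mono) auto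

text \<open>Over an interval of length y - x the count grows by at most y - x; this is what
  makes staircase maps contractions.\<close>

lemma above_growth:
  assumes "finite D" "x \<le> y"
  shows "above D x \<le> above D y + (y - x)"
proof -
  have "{j \<in> D. x \<le> j} \<subseteq> {j \<in> D. y \<le> j} \<union> {x..<y}" by auto
  hence "above D x \<le> card ({j \<in> D. y \<le> j} \<union> {x..<y})"
    unfolding above_def by (intro card_mono) (use assms in auto)
  also have "\<dots> \<le> above D y + card {x..<y}" unfolding above_def by (rule card_Un_le)
  finally show ?thesis by simp
qed

lemma above_le_card: "finite D \<Longrightarrow> above D x \<le> card D"
  unfolding above_def by (intro card_mono) auto

lemma above_eq_card:
  assumes "\<forall>j \<in> D. x \<le> j"
  shows "above D x = card D"
proof -
  have "{j \<in> D. x \<le> j} = D" using assms by auto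
  thus ?thesis by (simp add: above_def)
qed

lemma above_eq_0:
  assumes "\<forall>j \<in> D. j < x"
  shows "above D x = 0"
proof -
  have "{j \<in> D. x \<le> j} = {}" using assms by auto
  thus ?thesis unfolding above_def by (simp only: card.empty)
qed

section \<open>Order-preserving contractions of waist k\<close>

definition OP_waist :: "nat \<Rightarrow> nat \<Rightarrow> (nat \<Rightarrow> nat) set" where
  "OP_waist n k = {f \<in> ORCT n. order_preserving n f \<and> right_waist n f = k}"

definition staircase :: "nat \<Rightarrow> nat \<Rightarrow> nat set \<Rightarrow> nat \<Rightarrow> nat" where
  "staircase n k D = (\<lambda>x \<in> {1..n}. k - above D x)"

definition jumps :: "nat \<Rightarrow> (nat \<Rightarrow> nat) \<Rightarrow> nat set" where
  "jumps n f = {i \<in> {1..n-1}. f i \<noteq> f (Suc i)}"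

lemma waist_order_preserving:
  assumes "order_preserving n f" "1 \<le> n"
  shows "right_waist n f = f n"
  unfolding right_waist_def using assms by (intro Max_eqI) (auto simp: order_preserving_def)

lemma staircase_in_OP_waist:
  assumes D: "D \<subseteq> {1..n-1}" "card D < k" and "k \<le> n"
  shows "staircase n k D \<in> OP_waist n k"
proof -
  let ?g = "staircase n k D"
  have fin: "finite D" using D(1) finite_subset by blast
  have val: "x \<in> {1..n} \<Longrightarrow> ?g x = k - above D x" for x by (simp add: staircase_def)
  have bound: "above D x < k" for x using above_le_card[OF fin, of x] D(2) by linarith
  have "k - above D x \<in> {1..n}" for x using bound[of x] \<open>k \<le> n\<close> by auto
  hence maps: "?g \<in> {1..n} \<rightarrow>\<^sub>E {1..n}" by (auto simp: staircase_def)
  have mono: "order_preserving n ?g"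
    unfolding order_preserving_def using above_antimono[OF fin] by (auto simp: val diff_le_mono2)
  have step: "int (?g y) - int (?g x) \<le> int y - int x \<and> int (?g x) \<le> int (?g y)"
    if "x \<in> {1..n}" "y \<in> {1..n}" "x \<le> y" for x y
    using above_growth[OF fin \<open>x \<le> y\<close>] above_antimono[OF fin \<open>x \<le> y\<close>] bound[of x] bound[of y] that
    by (auto simp: val of_nat_diff)
  have contr: "contraction n ?g"
    unfolding contraction_def
  proof (intro ballI)
    fix x y assume xy: "x \<in> {1..n}" "y \<in> {1..n}"
    show "\<bar>int (?g x) - int (?g y)\<bar> \<le> \<bar>int x - int y\<bar>"
      using step[OF xy] step[OF xy(2,1)] by (cases "x \<le> y") linarith+
  qed
  have "1 \<le> n" using D(2) \<open>k \<le> n\<close> by linarith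
  moreover have "above D n = 0" by (intro above_eq_0) (use D(1) \<open>1 \<le> n\<close> in \<open>auto simp: subset_iff\<close>)
  ultimately have "right_waist n ?g = k"
    using waist_order_preserving[OF mono] by (simp add: val)
  thus ?thesis using maps mono contr by (simp add: OP_waist_def ORCT_def)
qed

lemma order_preserving_contraction_step:
  assumes "contraction n f" "order_preserving n f" "1 \<le> x" "x < n"
  shows "f (Suc x) = f x \<or> f (Suc x) = Suc (f x)"
proof -
  have x: "x \<in> {1..n}" "Suc x \<in> {1..n}" using assms by auto
  have "\<bar>int (f x) - int (f (Suc x))\<bar> \<le> \<bar>int x - int (Suc x)\<bar>"
    using assms(1) x unfolding contraction_def by blast
  moreover have "f x \<le> f (Suc x)" using assms(2) x unfolding order_preserving_def by simp
  ultimately show ?thesis by linarith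
qed

lemma order_preserving_contraction_above_jumps:
  assumes "contraction n f" "order_preserving n f" "x \<in> {1..n}"
  shows "f x + above (jumps n f) x = f n"
proof -
  have fin: "finite (jumps n f)" by (simp add: jumps_def)
  from assms(3) have "x \<le> n" "1 \<le> x" by auto
  thus ?thesis
  proof (induction x rule: inc_induct)
    case base
    have "above (jumps n f) n = 0" by (rule above_eq_0) (auto simp: jumps_def)
    thus ?case by simp
  next
    case (step x)
    have "x \<in> jumps n f \<longleftrightarrow> f x \<noteq> f (Suc x)" using step by (auto simp: jumps_def)
    thus ?case
      using order_preserving_contraction_step[OF assms(1,2) \<open>1 \<le> x\<close> \<open>x < n\<close>]
        above_Suc[OF fin, of x] step.IH step.prems by auto
  qed
qed

lemma OP_waist_eq_staircase:
  assumes f: "f \<in> OP_waist n k" and "1 \<le> n"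
  shows "card (jumps n f) < k" and "f = staircase n k (jumps n f)"
proof -
  have "f \<in> ORCT n" and mono: "order_preserving n f" and "right_waist n f = k"
    using f by (simp_all add: OP_waist_def)
  hence maps: "f \<in> {1..n} \<rightarrow>\<^sub>E {1..n}" and contr: "contraction n f"
    by (simp_all add: ORCT_def)
  have top: "f n = k"
    using waist_order_preserving[OF mono \<open>1 \<le> n\<close>] \<open>right_waist n f = k\<close> by simp
  note val = order_preserving_contraction_above_jumps[OF contr mono, unfolded top]
  have "above (jumps n f) 1 = card (jumps n f)" by (intro above_eq_card) (auto simp: jumps_def)
  moreover have "f 1 \<in> {1..n}" by (rule PiE_mem[OF maps]) (use \<open>1 \<le> n\<close> in simp)
  moreover have "f 1 + above (jumps n f) 1 = k" using val \<open>1 \<le> n\<close> by simp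
  ultimately show "card (jumps n f) < k" by (simp only: atLeastAtMost_iff) linarith
  show "f = staircase n k (jumps n f)"
  proof (rule ext)
    fix x show "f x = staircase n k (jumps n f) x"
    proof (cases "x \<in> {1..n}")
      case True
      hence "f x = k - above (jumps n f) x" using val[OF True] by linarith
      thus ?thesis using True by (simp add: staircase_def)
    next
      case False
      thus ?thesis using PiE_arb[OF maps False] by (auto simp: staircase_def)
    qed
  qed
qed

lemma jumps_staircase:
  assumes D: "D \<subseteq> {1..n-1}" "card D < k"
  shows "jumps n (staircase n k D) = D"
proof -
  have fin: "finite D" using D(1) finite_subset by blast
  have "i \<in> D \<longleftrightarrow> staircase n k D i \<noteq> staircase n k D (Suc i)" if "i \<in> {1..n-1}" for i
  proof -
    have "i \<in> {1..n}" "Suc i \<in> {1..n}" using that by auto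
    hence "staircase n k D i = k - above D i" "staircase n k D (Suc i) = k - above D (Suc i)"
      by (simp_all add: staircase_def)
    moreover have "above D i < k" using above_le_card[OF fin, of i] D(2) by linarith
    ultimately show ?thesis using above_Suc[OF fin, of i] by auto
  qed
  thus ?thesis using D(1) by (auto simp: jumps_def)
qed

lemma card_OP_waist:
  assumes "1 \<le> n" "k \<le> n"
  shows "card (OP_waist n k) = (\<Sum>s<k. (n - 1) choose s)"
proof -
  let ?S = "{D. D \<subseteq> {1..n-1} \<and> card D < k}"
  have "bij_betw (staircase n k) ?S (OP_waist n k)"
  proof (rule bij_betw_byWitness[where f' = "jumps n"])
    show "\<forall>D \<in> ?S. jumps n (staircase n k D) = D" using jumps_staircase by blast
    show "\<forall>f \<in> OP_waist n k. staircase n k (jumps n f) = f"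
      using OP_waist_eq_staircase(2) assms(1) by metis
    show "staircase n k ` ?S \<subseteq> OP_waist n k" using staircase_in_OP_waist assms(2) by blast
    show "jumps n ` OP_waist n k \<subseteq> ?S"
      using OP_waist_eq_staircase(1) assms(1) by (auto simp: jumps_def)
  qed
  hence "card (OP_waist n k) = card ?S" by (simp add: bij_betw_same_card)
  thus ?thesis using card_subsets_card_less[of "{1..n-1}" k] by simp
qed

section \<open>Order-reversing contractions of waist k, by reflection\<close>

definition OR_waist :: "nat \<Rightarrow> nat \<Rightarrow> (nat \<Rightarrow> nat) set" where
  "OR_waist n k = {f \<in> ORCT n. order_reversing n f \<and> right_waist n f = k}"

definition reflect :: "nat \<Rightarrow> (nat \<Rightarrow> nat) \<Rightarrow> nat \<Rightarrow> nat" where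
  "reflect n f = (\<lambda>x \<in> {1..n}. f (Suc n - x))"

lemma reflect_reflect: "f \<in> extensional {1..n} \<Longrightarrow> reflect n (reflect n f) = f"
  unfolding reflect_def by (rule ext) (auto simp: extensional_def)

lemma image_reflect: "reflect n f ` {1..n} = f ` {1..n}"
proof -
  have "(\<lambda>x. Suc n - x) ` {1..n} = {1..n}"
  proof
    show "{1..n} \<subseteq> (\<lambda>x. Suc n - x) ` {1..n}"
    proof
      fix y assume "y \<in> {1..n}"
      thus "y \<in> (\<lambda>x. Suc n - x) ` {1..n}" by (intro image_eqI[where x = "Suc n - y"]) auto
    qed
  qed auto
  hence "f ` (\<lambda>x. Suc n - x) ` {1..n} = f ` {1..n}" by simp
  thus ?thesis unfolding reflect_def image_image by simp
qed

lemma reflect_PiE: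
  assumes "f \<in> {1..n} \<rightarrow>\<^sub>E {1..n}"
  shows "reflect n f \<in> {1..n} \<rightarrow>\<^sub>E {1..n}"
  unfolding reflect_def
proof (rule restrict_PiE_iff[THEN iffD2], rule ballI)
  fix x assume "x \<in> {1..n}"
  hence "Suc n - x \<in> {1..n}" by auto
  thus "f (Suc n - x) \<in> {1..n}" using assms by auto
qed

lemma waist_reflect: "right_waist n (reflect n f) = right_waist n f"
  unfolding right_waist_def image_reflect ..

lemma contraction_reflect: "contraction n f \<Longrightarrow> contraction n (reflect n f)"
  unfolding contraction_def reflect_def
proof (intro ballI)
  fix x y assume c: "\<forall>x\<in>{1..n}. \<forall>y\<in>{1..n}. \<bar>int (f x) - int (f y)\<bar> \<le> \<bar>int x - int y\<bar>"
    and xy: "x \<in> {1..n}" "y \<in> {1..n}"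
  have "Suc n - x \<in> {1..n}" "Suc n - y \<in> {1..n}" using xy by auto
  from c[rule_format, OF this] xy
  show "\<bar>int ((\<lambda>x\<in>{1..n}. f (Suc n - x)) x) - int ((\<lambda>x\<in>{1..n}. f (Suc n - x)) y)\<bar>
        \<le> \<bar>int x - int y\<bar>"
    by (simp add: of_nat_diff)
qed

lemma order_preserving_reflect: "order_reversing n f \<Longrightarrow> order_preserving n (reflect n f)"
  unfolding order_reversing_def order_preserving_def
proof (intro ballI impI)
  fix x y assume rev: "\<forall>x\<in>{1..n}. \<forall>y\<in>{1..n}. x \<le> y \<longrightarrow> f y \<le> f x"
    and xy: "x \<in> {1..n}" "y \<in> {1..n}" "x \<le> y"
  have "Suc n - y \<in> {1..n}" "Suc n - x \<in> {1..n}" "Suc n - y \<le> Suc n - x" using xy by auto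
  from rev[rule_format, OF this] xy show "reflect n f x \<le> reflect n f y" by (simp add: reflect_def)
qed

lemma order_reversing_reflect: "order_preserving n f \<Longrightarrow> order_reversing n (reflect n f)"
  unfolding order_reversing_def order_preserving_def
proof (intro ballI impI)
  fix x y assume mono: "\<forall>x\<in>{1..n}. \<forall>y\<in>{1..n}. x \<le> y \<longrightarrow> f x \<le> f y"
    and xy: "x \<in> {1..n}" "y \<in> {1..n}" "x \<le> y"
  have "Suc n - y \<in> {1..n}" "Suc n - x \<in> {1..n}" "Suc n - y \<le> Suc n - x" using xy by auto
  from mono[rule_format, OF this] xy show "reflect n f y \<le> reflect n f x" by (simp add: reflect_def)
qed

lemma card_OR_waist: "card (OR_waist n k) = card (OP_waist n k)"
proof -
  have ext: "f \<in> extensional {1..n}" if "f \<in> ORCT n" for f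
    using that by (auto simp: ORCT_def PiE_def)
  have "bij_betw (reflect n) (OR_waist n k) (OP_waist n k)"
  proof (rule bij_betw_byWitness[where f' = "reflect n"])
    show "\<forall>f \<in> OR_waist n k. reflect n (reflect n f) = f"
      using ext reflect_reflect by (auto simp: OR_waist_def)
    show "\<forall>f \<in> OP_waist n k. reflect n (reflect n f) = f"
      using ext reflect_reflect by (auto simp: OP_waist_def)
    show "reflect n ` OR_waist n k \<subseteq> OP_waist n k"
    proof (rule image_subsetI)
      fix f assume "f \<in> OR_waist n k"
      hence "f \<in> {1..n} \<rightarrow>\<^sub>E {1..n}" "contraction n f" "order_reversing n f"
        "right_waist n f = k" by (simp_all add: OR_waist_def ORCT_def)
      thus "reflect n f \<in> OP_waist n k"
        using reflect_PiE contraction_reflect order_preserving_reflect waist_reflect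
        by (simp add: OP_waist_def ORCT_def)
    qed
    show "reflect n ` OP_waist n k \<subseteq> OR_waist n k"
    proof (rule image_subsetI)
      fix f assume "f \<in> OP_waist n k"
      hence "f \<in> {1..n} \<rightarrow>\<^sub>E {1..n}" "contraction n f" "order_preserving n f"
        "right_waist n f = k" by (simp_all add: OP_waist_def ORCT_def)
      thus "reflect n f \<in> OR_waist n k"
        using reflect_PiE contraction_reflect order_reversing_reflect waist_reflect
        by (simp add: OR_waist_def ORCT_def)
    qed
  qed
  thus ?thesis by (simp add: bij_betw_same_card)
qed

text \<open>A map that is both order-preserving and order-reversing is constant, so the only
  map of waist k in both classes is the constant map k.\<close>

lemma OP_waist_Int_OR_waist:
  assumes "1 \<le> k" "k \<le> n"
  shows "OP_waist n k \<inter> OR_waist n k = {\<lambda>x \<in> {1..n}. k}"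
proof (intro equalityI subsetI)
  fix f assume f: "f \<in> OP_waist n k \<inter> OR_waist n k"
  hence mono: "order_preserving n f" "order_reversing n f" and "right_waist n f = k"
    and ext: "f \<in> extensional {1..n}"
    by (auto simp: OP_waist_def OR_waist_def ORCT_def PiE_def)
  have n1: "1 \<le> n" using assms by linarith
  hence top: "f n = k" using waist_order_preserving[OF mono(1)] \<open>right_waist n f = k\<close> by simp
  have "f x = k" if "x \<in> {1..n}" for x
  proof -
    have "f x \<le> f n" "f n \<le> f x"
      using mono that n1 unfolding order_preserving_def order_reversing_def by auto
    thus ?thesis using top by simp
  qed
  with ext show "f \<in> {\<lambda>x \<in> {1..n}. k}" by (auto simp: extensional_def)
next
  fix f assume "f \<in> {\<lambda>x \<in> {1..n}. k}"
  hence f: "f = (\<lambda>x \<in> {1..n}. k)" by simp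
  have mono: "order_preserving n f" "order_reversing n f"
    by (auto simp: f order_preserving_def order_reversing_def)
  have "right_waist n f = k" using waist_order_preserving[OF mono(1)] assms by (simp add: f)
  moreover have "f \<in> ORCT n" using assms mono by (auto simp: f ORCT_def contraction_def)
  ultimately show "f \<in> OP_waist n k \<inter> OR_waist n k" using mono by (simp add: OP_waist_def OR_waist_def)
qed

theorem corollary3p5:
  fixes n k :: nat
  assumes "1 \<le> n" and "1 \<le> k" and "k \<le> n"
  shows "int (card {f \<in> ORCT n. right_waist n f = k})
           = 2 * (\<Sum>p = 1..k. int ((n - 1) choose (p - 1))) - 1"
proof -
  have split: "{f \<in> ORCT n. right_waist n f = k} = OP_waist n k \<union> OR_waist n k"
    by (auto simp: OP_waist_def OR_waist_def ORCT_def)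
  have "finite (ORCT n)"
    by (rule finite_subset[of _ "{1..n} \<rightarrow>\<^sub>E {1..n}"]) (auto simp: ORCT_def finite_PiE)
  hence "finite (OP_waist n k)" "finite (OR_waist n k)" by (auto simp: OP_waist_def OR_waist_def)
  from card_Un_Int[OF this]
  have "card (OP_waist n k \<union> OR_waist n k) + 1 = 2 * (\<Sum>s<k. (n - 1) choose s)"
    using OP_waist_Int_OR_waist[OF assms(2,3)] card_OR_waist card_OP_waist[OF assms(1,3)] by simp
  moreover have "(\<Sum>p = 1..k. int ((n - 1) choose (p - 1))) = int (\<Sum>s<k. (n - 1) choose s)"
    by (simp add: sum.atLeast1_atMost_eq)
  ultimately show ?thesis unfolding split by linarith
qed

end
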